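(* Assume $d\ge2$. Let $A,B$ be an LR pair on $V$ with $AB-BA=I$, and define $C=-A-B$. Then $B,C$ and $C,A$ are LR pairs on $V$, and $BC-CB=I$ and $CA-AC=I$.
   Context: Let $V$ be a vector space over a field $\mathbb F$ with $\dim V=d+1$. A decomposition of $V$ is a sequence $(V_i)_{i=0}^d$ of one-dimensional subspaces with $V=\bigoplus V_i$. $X\in\mathrm{End}(V)$ lowers it if $XV_i=V_{i-1}$ ($1\le i\le d$), $XV_0=0$; raises it if $XV_i=V_{i+1}$ ($0\le i\le d-1$), $XV_d=0$. An ordered pair $A,B\in\mathrm{End}(V)$ is an LR pair on $V$ if some decomposition is lowered by $A$ and raised by $B$. (Under the hypothesis $AB-BA=I$ one necessarily has that $d+1$ is a prime $p$ and $\mathrm{Char}\,\mathbb F=p$.) *)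

theory Defs
  imports Complex_Main
begin

definition is_decomposition ::
  "('f::field \<Rightarrow> 'v::ab_group_add \<Rightarrow> 'v) \<Rightarrow> nat \<Rightarrow> (nat \<Rightarrow> 'v set) \<Rightarrow> bool" where
  "is_decomposition scale d Vs \<longleftrightarrow>
     (\<forall>i\<le>d. Modules.module.subspace scale (Vs i) \<and> Vector_Spaces.vector_space.dim scale (Vs i) = 1) \<and>
     Modules.module.span scale (\<Union>i\<le>d. Vs i) = UNIV \<and>
     (\<forall>f. (\<forall>i\<le>d. f i \<in> Vs i) \<and> (\<Sum>i\<le>d. f i) = 0 \<longrightarrow> (\<forall>i\<le>d. f i = 0))"

definition lowers :: "nat \<Rightarrow> ('v::ab_group_add \<Rightarrow> 'v) \<Rightarrow> (nat \<Rightarrow> 'v set) \<Rightarrow> bool" where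
  "lowers d X Vs \<longleftrightarrow> (\<forall>i. 1 \<le> i \<and> i \<le> d \<longrightarrow> X ` Vs i = Vs (i - 1)) \<and> X ` Vs 0 = {0}"

definition raises :: "nat \<Rightarrow> ('v::ab_group_add \<Rightarrow> 'v) \<Rightarrow> (nat \<Rightarrow> 'v set) \<Rightarrow> bool" where
  "raises d X Vs \<longleftrightarrow> (\<forall>i. i < d \<longrightarrow> X ` Vs i = Vs (i + 1)) \<and> X ` Vs d = {0}"

definition LR_pair ::
  "('f::field \<Rightarrow> 'v::ab_group_add \<Rightarrow> 'v) \<Rightarrow> nat \<Rightarrow> ('v \<Rightarrow> 'v) \<Rightarrow> ('v \<Rightarrow> 'v) \<Rightarrow> bool" where
  "LR_pair scale d A B \<longleftrightarrow> Vector_Spaces.linear scale scale A \<and> Vector_Spaces.linear scale scale B \<and>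
     (\<exists>Vs. is_decomposition scale d Vs \<and> lowers d A Vs \<and> raises d B Vs)"

end

theory Submission
  imports Defs
begin

text \<open>
  Let \<open>v\<close> span \<open>V\<^sub>0\<close> and \<open>v\<^sub>j = B\<^sup>j v\<close>. The relation \<open>[A, B] = I\<close> gives
  \<open>A v\<^sub>j\<^sub>+\<^sub>1 = (j + 1) v\<^sub>j\<close>; since \<open>A\<close> maps \<open>V\<^sub>j\<^sub>+\<^sub>1\<close> onto \<open>V\<^sub>j \<noteq> 0\<close>, the integers \<open>1, \<dots>, d\<close>
  are nonzero in the field, while \<open>[A, B] = I\<close> applied to \<open>v\<^sub>d\<close>, where \<open>B v\<^sub>d = 0\<close>, gives
  \<open>d + 1 = 0\<close>. So \<open>d\<close> is even, and \<open>u = exp(-B\<^sup>2/2) v\<close>, a finite sum as \<open>B\<close> is nilpotent,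
  is defined; it is nonzero and \<open>(A + B) u = 0\<close>, i.e. \<open>C u = 0\<close>.
  Since \<open>[C, A] = I\<close> and \<open>[C, B] = -I\<close>, the strings \<open>A\<^sup>i u\<close> and \<open>B\<^sup>i u\<close> are lowered by \<open>C\<close>
  with nonzero coefficients, hence linearly independent, and so span decompositions lowered
  by \<open>C\<close> and raised by \<open>A\<close>, resp. \<open>B\<close>. Reversing a decomposition exchanges lowering and
  raising, which turns the pair \<open>C, B\<close> into \<open>B, C\<close>.
\<close>

lemma linear_ops:
  assumes "Vector_Spaces.linear s s X"
  shows "X (x + y) = X x + X y" "X (s c x) = s c (X x)" "X 0 = 0" "X (- x) = - X x"
    "X (x - y) = X x - X y" "X (sum f S) = (\<Sum>i\<in>S. X (f i))"
proof -
  interpret Vector_Spaces.linear s s X by fact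
  show "X (x + y) = X x + X y" "X (s c x) = s c (X x)" "X 0 = 0" "X (- x) = - X x"
    "X (x - y) = X x - X y" "X (sum f S) = (\<Sum>i\<in>S. X (f i))"
    by (simp_all add: add scale zero neg diff sum)
qed

lemma lowers_reverse:
  assumes "lowers d X Vs"
  shows "raises d X (\<lambda>i. Vs (d - i))"
  unfolding raises_def
proof (intro conjI allI impI)
  fix i assume "i < d"
  then have "1 \<le> d - i \<and> d - i \<le> d" "d - i - 1 = d - (i + 1)"
    by auto
  then show "X ` Vs (d - i) = Vs (d - (i + 1))"
    using assms unfolding lowers_def by metis
qed (use assms in \<open>simp add: lowers_def\<close>)

lemma raises_reverse:
  assumes "raises d Y Vs"
  shows "lowers d Y (\<lambda>i. Vs (d - i))"
  unfolding lowers_def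
proof (intro conjI allI impI)
  fix i assume "1 \<le> i \<and> i \<le> d"
  then have "d - i < d" "d - (i - 1) = d - i + 1"
    by auto
  then show "Y ` Vs (d - i) = Vs (d - (i - 1))"
    using assms unfolding raises_def by metis
qed (use assms in \<open>simp add: raises_def\<close>)

lemma is_decomposition_reverse:
  assumes "is_decomposition scale d Vs"
  shows "is_decomposition scale d (\<lambda>i. Vs (d - i))"
proof -
  have "(\<lambda>i. d - i) ` {..d} = {..d}"
  proof
    show "{..d} \<subseteq> (\<lambda>i. d - i) ` {..d}"
    proof
      fix x assume "x \<in> {..d}"
      then have "x = d - (d - x)" "d - x \<in> {..d}"
        by auto
      then show "x \<in> (\<lambda>i. d - i) ` {..d}"
        by (rule image_eqI)
    qed
  qed auto
  then have union: "(\<Union>i\<le>d. Vs (d - i)) = (\<Union>i\<le>d. Vs i)"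
    by (metis image_image)
  have direct: "\<And>g. \<forall>i\<le>d. g i \<in> Vs i \<Longrightarrow> (\<Sum>i\<le>d. g i) = 0 \<Longrightarrow> \<forall>i\<le>d. g i = 0"
    using assms unfolding is_decomposition_def by blast
  have direct_reverse: "f i = 0"
    if f: "\<forall>i\<le>d. f i \<in> Vs (d - i)" "(\<Sum>i\<le>d. f i) = 0" and "i \<le> d" for f i
  proof -
    have "\<forall>j\<le>d. f (d - j) \<in> Vs j"
    proof (intro allI impI)
      fix j assume "j \<le> d"
      from f(1) have "f (d - j) \<in> Vs (d - (d - j))"
        by simp
      with \<open>j \<le> d\<close> show "f (d - j) \<in> Vs j"
        by simp
    qed
    moreover have "(\<Sum>j\<le>d. f (d - j)) = 0"
      using f(2) sum.reindex_bij_witness[where i = "\<lambda>i. d - i" and j = "\<lambda>i. d - i"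
          and S = "{..d}" and T = "{..d}" and h = f and g = "\<lambda>j. f (d - j)"]
      by auto
    ultimately have "\<forall>j\<le>d. f (d - j) = 0"
      by (rule direct)
    then have "f (d - (d - i)) = 0"
      by simp
    with \<open>i \<le> d\<close> show ?thesis
      by simp
  qed
  show ?thesis
    unfolding is_decomposition_def union
    using assms direct_reverse unfolding is_decomposition_def by auto
qed

lemma LR_pair_swap:
  assumes "LR_pair scale d X Y"
  shows "LR_pair scale d Y X"
proof -
  obtain Vs where "Vector_Spaces.linear scale scale X" "Vector_Spaces.linear scale scale Y"
    "is_decomposition scale d Vs" "lowers d X Vs" "raises d Y Vs"
    using assms unfolding LR_pair_def by blast
  then show ?thesis
    unfolding LR_pair_def
    using is_decomposition_reverse lowers_reverse raises_reverse by blast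
qed

lemma even_if_of_nat_Suc_eq_0:
  fixes d :: nat
  assumes "\<And>j. 1 \<le> j \<Longrightarrow> j \<le> d \<Longrightarrow> of_nat j \<noteq> (0 :: 'a :: field)"
    and "of_nat (Suc d) = (0 :: 'a)" and "2 \<le> d"
  shows "even d"
proof (rule ccontr)
  assume "odd d"
  then have "even (Suc d)"
    by simp
  then obtain m where m: "Suc d = 2 * m"
    by (rule evenE)
  have "of_nat 2 \<noteq> (0 :: 'a)" "of_nat m \<noteq> (0 :: 'a)"
    using assms(1)[of 2] assms(1)[of m] m \<open>2 \<le> d\<close> by auto
  then have "of_nat (Suc d) \<noteq> (0 :: 'a)"
    unfolding m of_nat_mult by simp
  then show False
    using assms(2) by simp
qed

text \<open>The Taylor coefficients of \<open>exp(-x\<^sup>2/2)\<close>.\<close>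

fun gauss_coeff :: "nat \<Rightarrow> 'a :: field" where
  "gauss_coeff 0 = 1"
| "gauss_coeff (Suc 0) = 0"
| "gauss_coeff (Suc (Suc j)) = - gauss_coeff j / of_nat (Suc (Suc j))"

lemma gauss_coeff_odd: "gauss_coeff (Suc (2 * k)) = 0"
  by (induction k) auto

context vector_space
begin

lemma linear_funpow:
  assumes "Vector_Spaces.linear scale scale X"
  shows "Vector_Spaces.linear scale scale (X ^^ k)"
proof (induction k)
  case 0
  show ?case by (simp add: linear_ident vector_space_axioms)
next
  case (Suc k)
  then show ?case
    unfolding funpow.simps(2) by (rule Vector_Spaces.linear_compose[OF _ assms])
qed

lemma linear_image_span_singleton:
  assumes "Vector_Spaces.linear scale scale X"
  shows "X ` span {x} = span {X x}"
  unfolding span_singleton image_image using linear_ops(2)[OF assms] by auto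

lemma span_singleton_scale:
  assumes "c \<noteq> 0"
  shows "span {c *s x} = span {x}"
proof
  show "span {c *s x} \<subseteq> span {x}"
    by (rule span_minimal) (auto intro: span_scale span_base)
  have "x = (1 / c) *s (c *s x)"
    using assms by simp
  then have "x \<in> span {c *s x}"
    by (metis span_scale span_base singletonI)
  then show "span {x} \<subseteq> span {c *s x}"
    by (intro span_minimal) auto
qed

lemma dim_eq_1_span_singletonE:
  assumes "subspace S" "dim S = 1"
  obtains v where "v \<noteq> 0" "S = span {v}"
proof -
  obtain B where B: "B \<subseteq> S" "independent B" "S \<subseteq> span B" "card B = dim S"
    by (rule basis_exists)
  then obtain v where v: "B = {v}"
    using assms(2) B(4) by (metis card_1_singletonE)
  have "v \<noteq> 0"
    using B(2) v dependent_zero by blast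
  moreover have "S = span {v}"
    using B(1,3) assms(1) v span_minimal[of "{v}" S] by auto
  ultimately show thesis
    by (rule that)
qed

lemma finite_dimensional_of_dim_Suc:
  assumes "dim (UNIV :: 'b set) = Suc n"
  obtains Bs where "finite_dimensional_vector_space scale Bs"
proof -
  obtain Bs where Bs: "independent Bs" "UNIV \<subseteq> span Bs" "card Bs = dim (UNIV :: 'b set)"
    using basis_exists by blast
  then have "finite Bs"
    using assms card.infinite by fastforce
  then show thesis
    using that Bs
    by (metis finite_dimensional_vector_space.intro finite_dimensional_vector_space_axioms.intro
        top.extremum_uniqueI vector_space_axioms)
qed

lemma decomposition_component_ne_zero:
  assumes "is_decomposition scale d Vs" "i \<le> d"
  shows "Vs i \<noteq> {0}"
proof
  assume "Vs i = {0}"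
  then have "dim (Vs i) = 0"
    by (metis dim_span span_empty dim_eq_card_independent independent_empty card.empty)
  then show False
    using assms unfolding is_decomposition_def by simp
qed

lemma lowered_chain_independent:
  assumes linX: "Vector_Spaces.linear scale scale X"
    and lower: "\<And>i. i < d \<Longrightarrow> X (w (Suc i)) = \<alpha> i *s w i"
    and \<alpha>: "\<And>i. i < d \<Longrightarrow> \<alpha> i \<noteq> 0"
    and bottom: "X (w 0) = 0" "w 0 \<noteq> 0"
    and sum_zero: "(\<Sum>j\<le>d. c j *s w j) = 0" and "i \<le> d"
  shows "c i = 0"
proof -
  have "\<forall>c i. (\<Sum>j\<le>n. c j *s w j) = 0 \<longrightarrow> i \<le> n \<longrightarrow> c i = 0" if "n \<le> d" for n
    using that
  proof (induction n)
    case 0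
    then show ?case using bottom(2) by simp
  next
    case (Suc n)
    show ?case
    proof (intro allI impI)
      fix c i assume sum: "(\<Sum>j\<le>Suc n. c j *s w j) = 0" and i: "i \<le> Suc n"
      have "X (\<Sum>j\<le>Suc n. c j *s w j) = (\<Sum>j\<le>n. (c (Suc j) * \<alpha> j) *s w j)"
        using Suc.prems lower
        by (simp add: linear_ops[OF linX] sum.atMost_Suc_shift[of _ n] bottom(1) del: sum.atMost_Suc)
      moreover have "X (\<Sum>j\<le>Suc n. c j *s w j) = 0"
        using sum by (simp add: linear_ops[OF linX])
      ultimately have "(\<Sum>j\<le>n. (c (Suc j) * \<alpha> j) *s w j) = 0"
        by simp
      then have "\<forall>j\<le>n. c (Suc j) * \<alpha> j = 0"
        using Suc.IH Suc.prems by (meson Suc_leD)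
      then have high: "\<forall>j\<le>n. c (Suc j) = 0"
        using \<alpha> Suc.prems by auto
      then have "c 0 *s w 0 = 0"
        using sum by (simp add: sum.atMost_Suc_shift[of _ n] del: sum.atMost_Suc)
      then have "c 0 = 0"
        using bottom(2) by simp
      with high i show "c i = 0"
        by (cases i) auto
    qed
  qed
  then show ?thesis
    using sum_zero \<open>i \<le> d\<close> by blast
qed

lemma independent_familyD:
  fixes d :: nat
  assumes indep: "\<And>c i. (\<Sum>j\<le>d. c j *s w j) = 0 \<Longrightarrow> i \<le> d \<Longrightarrow> c i = 0"
  shows "inj_on w {..d}" and "independent (w ` {..d})"
proof -
  define \<delta> :: "nat \<Rightarrow> nat \<Rightarrow> 'a" where "\<delta> i j = (if j = i then 1 else 0)" for i j
  have sum_\<delta>: "(\<Sum>j\<le>d. \<delta> i j *s w j) = w i" if "i \<le> d" for i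
  proof -
    have "(\<Sum>j\<le>d. \<delta> i j *s w j) = (\<Sum>j\<le>d. if j = i then w j else 0)"
      unfolding \<delta>_def by (rule sum.cong) auto
    then show ?thesis
      using that by simp
  qed
  show inj: "inj_on w {..d}"
  proof (rule inj_onI, rule ccontr)
    fix i j assume ij: "i \<in> {..d}" "j \<in> {..d}" "w i = w j" "i \<noteq> j"
    have "(\<Sum>k\<le>d. (\<delta> i k - \<delta> j k) *s w k) = 0"
      using ij sum_\<delta> by (simp add: scale_left_diff_distrib sum_subtractf)
    then show False
      using indep[of "\<lambda>k. \<delta> i k - \<delta> j k" i] ij by (simp add: \<delta>_def)
  qed
  show "independent (w ` {..d})"
  proof (rule independent_if_scalars_zero)
    fix f x assume sum: "(\<Sum>x\<in>w ` {..d}. f x *s x) = 0" and "x \<in> w ` {..d}"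
    then obtain i where i: "i \<le> d" "x = w i"
      by auto
    have "(\<Sum>j\<le>d. f (w j) *s w j) = 0"
      using sum by (simp add: sum.reindex[OF inj])
    then show "f x = 0"
      using indep[of "\<lambda>j. f (w j)" i] i by simp
  qed simp
qed

lemma is_decomposition_of_independent:
  assumes dimV: "dim (UNIV :: 'b set) = d + 1"
    and indep: "\<And>c i. (\<Sum>j\<le>d. c j *s w j) = 0 \<Longrightarrow> i \<le> d \<Longrightarrow> c i = 0"
  shows "is_decomposition scale d (\<lambda>i. span {w i})"
proof -
  define W where "W = w ` {..d}"
  have "inj_on w {..d}"
    using indep by (rule independent_familyD(1))
  have "independent W"
    unfolding W_def using indep by (rule independent_familyD(2))
  moreover have "card W = d + 1"
    unfolding W_def using card_image[OF \<open>inj_on w {..d}\<close>] by simp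
  moreover obtain Bs where "finite_dimensional_vector_space scale Bs"
    using dimV finite_dimensional_of_dim_Suc by auto
  ultimately have span_W: "span W = UNIV"
    using finite_dimensional_vector_space.card_ge_dim_independent[of scale Bs W UNIV] dimV
    by auto
  show ?thesis
    unfolding is_decomposition_def
  proof (intro conjI allI impI)
    show "subspace (span {w i})" for i
      by simp
  next
    fix i assume "i \<le> d"
    then have "independent {w i}"
      using independent_mono[OF \<open>independent W\<close>, of "{w i}"] unfolding W_def by auto
    from dim_eq_card_independent[OF this] show "dim (span {w i}) = 1"
      by simp
  next
    have "W \<subseteq> (\<Union>i\<le>d. span {w i})"
      unfolding W_def by (auto intro: span_base)
    then show "span (\<Union>i\<le>d. span {w i}) = UNIV"
      using span_mono[of W] span_W by auto
  next
    fix f i assume f: "(\<forall>i\<le>d. f i \<in> span {w i}) \<and> sum f {..d} = 0" and "i \<le> d"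
    have "\<forall>j\<le>d. \<exists>k. f j = k *s w j"
      using f unfolding span_singleton by auto
    then obtain c where f_eq: "\<And>j. j \<le> d \<Longrightarrow> f j = c j *s w j"
      by metis
    have "(\<Sum>j\<le>d. c j *s w j) = 0"
      using f f_eq by (metis (no_types, lifting) atMost_iff sum.cong)
    then show "f i = 0"
      using indep f_eq \<open>i \<le> d\<close> by simp
  qed
qed

lemma LR_pair_of_chain:
  assumes dimV: "dim (UNIV :: 'b set) = d + 1"
    and linX: "Vector_Spaces.linear scale scale X" and linY: "Vector_Spaces.linear scale scale Y"
    and lower: "\<And>i. i < d \<Longrightarrow> X (w (Suc i)) = \<alpha> i *s w i" "X (w 0) = 0"
    and raise: "\<And>i. i < d \<Longrightarrow> Y (w i) = \<beta> i *s w (Suc i)" "Y (w d) = 0"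
    and nonzero: "\<And>i. i < d \<Longrightarrow> \<alpha> i \<noteq> 0" "\<And>i. i < d \<Longrightarrow> \<beta> i \<noteq> 0" "w 0 \<noteq> 0"
  shows "LR_pair scale d X Y"
proof -
  define Vs where "Vs i = span {w i}" for i
  have "is_decomposition scale d Vs"
    unfolding Vs_def
  proof (rule is_decomposition_of_independent[OF dimV])
    show "c i = 0" if "(\<Sum>j\<le>d. c j *s w j) = 0" "i \<le> d" for c i
      by (rule lowered_chain_independent[of X d w \<alpha>]) (use assms that in auto)
  qed
  moreover have "lowers d X Vs"
    unfolding lowers_def Vs_def
  proof (intro conjI allI impI)
    fix i assume "1 \<le> i \<and> i \<le> d"
    then obtain j where "i = Suc j" "j < d"
      by (cases i) auto
    then show "X ` span {w i} = span {w (i - 1)}"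
      using lower nonzero by (simp add: linear_image_span_singleton[OF linX] span_singleton_scale)
  qed (simp add: linear_image_span_singleton[OF linX] lower(2))
  moreover have "raises d Y Vs"
    unfolding raises_def Vs_def
    using raise nonzero by (simp add: linear_image_span_singleton[OF linY] span_singleton_scale)
  ultimately show ?thesis
    unfolding LR_pair_def using linX linY by blast
qed

lemma commutator_funpow_apply:
  assumes linY: "Vector_Spaces.linear scale scale Y"
    and comm: "\<And>v. X (Y v) - Y (X v) = c *s v" and "X u = 0"
  shows "X ((Y ^^ Suc n) u) = (of_nat (Suc n) * c) *s (Y ^^ n) u"
proof (induction n)
  case 0
  show ?case
    using comm[of u] \<open>X u = 0\<close> by (simp add: linear_ops[OF linY])
next
  case (Suc n)
  have "X ((Y ^^ Suc (Suc n)) u) = Y (X ((Y ^^ Suc n) u)) + c *s (Y ^^ Suc n) u"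
    using comm[of "(Y ^^ Suc n) u"] by (simp add: algebra_simps)
  also have "\<dots> = (of_nat (Suc n) * c) *s (Y ^^ Suc n) u + c *s (Y ^^ Suc n) u"
    using Suc.IH by (simp add: linear_ops[OF linY])
  also have "\<dots> = (of_nat (Suc (Suc n)) * c) *s (Y ^^ Suc n) u"
    by (simp only: scale_left_distrib[symmetric]) (simp add: distrib_right)
  finally show ?case .
qed

lemma LR_pair_of_commutator:
  assumes dimV: "dim (UNIV :: 'b set) = d + 1"
    and linX: "Vector_Spaces.linear scale scale X" and linY: "Vector_Spaces.linear scale scale Y"
    and comm: "\<And>v. X (Y v) - Y (X v) = c *s v" and "c \<noteq> 0"
    and char: "\<And>j. 1 \<le> j \<Longrightarrow> j \<le> d \<Longrightarrow> of_nat j \<noteq> (0 :: 'a)"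
    and "u \<noteq> 0" "X u = 0" "(Y ^^ Suc d) u = 0"
  shows "LR_pair scale d X Y"
proof (rule LR_pair_of_chain[OF dimV linX linY, where w = "\<lambda>i. (Y ^^ i) u"
      and \<alpha> = "\<lambda>i. of_nat (Suc i) * c" and \<beta> = "\<lambda>_. 1"])
  show "X ((Y ^^ Suc i) u) = (of_nat (Suc i) * c) *s (Y ^^ i) u" for i
    using commutator_funpow_apply[OF linY comm \<open>X u = 0\<close>] .
  show "of_nat (Suc i) * c \<noteq> 0" if "i < d" for i
    using char[of "Suc i"] that \<open>c \<noteq> 0\<close> by simp
qed (use assms in auto)

lemma raises_funpow_apply_mem:
  assumes "raises d Y Vs" "x \<in> Vs i" "i + k \<le> d"
  shows "(Y ^^ k) x \<in> Vs (i + k)"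
  using assms(3)
proof (induction k)
  case 0
  then show ?case using assms(2) by simp
next
  case (Suc k)
  then have "Y ((Y ^^ k) x) \<in> Y ` Vs (i + k)"
    by simp
  then show ?case
    using assms(1) Suc.prems unfolding raises_def by simp
qed

lemma raises_funpow_Suc_eq_zero:
  assumes dec: "is_decomposition scale d Vs" and "raises d Y Vs"
    and linY: "Vector_Spaces.linear scale scale Y"
  shows "(Y ^^ Suc d) x = 0"
proof -
  define K where "K = {x. (Y ^^ Suc d) x = 0}"
  have "subspace K"
    unfolding K_def using linear_funpow[OF linY]
    by (metis module_hom.subspace_kernel module_hom_eq_linear)
  moreover have "Vs i \<subseteq> K" if "i \<le> d" for i
  proof
    fix x assume "x \<in> Vs i"
    then have "(Y ^^ (d - i)) x \<in> Vs d"
      using raises_funpow_apply_mem[OF \<open>raises d Y Vs\<close>, of x i "d - i"] that by simp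
    then have "Y ((Y ^^ (d - i)) x) = 0"
      using \<open>raises d Y Vs\<close> unfolding raises_def by blast
    moreover have "Suc d = i + Suc (d - i)"
      using that by simp
    then have "(Y ^^ Suc d) x = (Y ^^ i) (Y ((Y ^^ (d - i)) x))"
      by (metis funpow_add funpow.simps(2) comp_apply)
    ultimately show "x \<in> K"
      unfolding K_def by (simp add: linear_ops[OF linear_funpow[OF linY]])
  qed
  ultimately have "span (\<Union>i\<le>d. Vs i) \<subseteq> K"
    by (intro span_minimal) auto
  then show ?thesis
    using dec unfolding is_decomposition_def K_def by auto
qed

lemma lowers_funpow_Suc_eq_zero:
  assumes "is_decomposition scale d Vs" "lowers d X Vs" "Vector_Spaces.linear scale scale X"
  shows "(X ^^ Suc d) x = 0"
  by (rule raises_funpow_Suc_eq_zero[OF is_decomposition_reverse lowers_reverse])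
    (use assms in auto)

lemma raises_span_funpow:
  assumes "raises d Y Vs" "Vector_Spaces.linear scale scale Y" "Vs 0 = span {v}" "j \<le> d"
  shows "Vs j = span {(Y ^^ j) v}"
  using assms(4)
proof (induction j)
  case (Suc j)
  then have "j < d"
    by simp
  with assms(1) have "Vs (Suc j) = Y ` Vs j"
    unfolding raises_def by simp
  then show ?case
    using Suc by (simp add: linear_image_span_singleton[OF assms(2)])
qed (use assms(3) in simp)

lemma LR_pair_bottom_vector:
  assumes dec: "is_decomposition scale d Vs" and "lowers d A Vs" and rai: "raises d B Vs"
    and linB: "Vector_Spaces.linear scale scale B"
  obtains v where "A v = 0" "\<And>j. j \<le> d \<Longrightarrow> Vs j = span {(B ^^ j) v}"
    "\<And>j. j \<le> d \<Longrightarrow> (B ^^ j) v \<noteq> 0"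
proof -
  have "subspace (Vs 0)" "dim (Vs 0) = 1"
    using dec unfolding is_decomposition_def by auto
  then obtain v where v: "v \<noteq> 0" "Vs 0 = span {v}"
    by (rule dim_eq_1_span_singletonE)
  have "A v \<in> A ` Vs 0"
    using v(2) span_base[of v "{v}"] by simp
  then have "A v = 0"
    using \<open>lowers d A Vs\<close> unfolding lowers_def by simp
  moreover note spans = raises_span_funpow[OF rai linB v(2)]
  moreover have "(B ^^ j) v \<noteq> 0" if "j \<le> d" for j
  proof
    assume "(B ^^ j) v = 0"
    then have "Vs j = {0}"
      using spans[OF that] by simp
    with decomposition_component_ne_zero[OF dec that] show False ..
  qed
  ultimately show thesis
    by (rule that)
qed

lemma LR_pair_commutator_char:
  assumes "lowers d A Vs" and "raises d B Vs"
    and linA: "Vector_Spaces.linear scale scale A" and linB: "Vector_Spaces.linear scale scale B"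
    and comm: "\<And>v. A (B v) - B (A v) = v"
    and bottom: "A v = 0" "\<And>j. j \<le> d \<Longrightarrow> Vs j = span {(B ^^ j) v}"
      "\<And>j. j \<le> d \<Longrightarrow> (B ^^ j) v \<noteq> 0"
    and "1 \<le> d"
  shows "\<And>j. 1 \<le> j \<Longrightarrow> j \<le> d \<Longrightarrow> of_nat j \<noteq> (0 :: 'a)" and "of_nat (Suc d) = (0 :: 'a)"
proof -
  have A_raised: "A ((B ^^ Suc j) v) = of_nat (Suc j) *s (B ^^ j) v" for j
    using commutator_funpow_apply[OF linB, of A 1] comm bottom(1) by simp
  show "of_nat j \<noteq> (0 :: 'a)" if "1 \<le> j" "j \<le> d" for j
  proof
    assume j: "of_nat j = (0 :: 'a)"
    obtain i where i: "j = Suc i"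
      using \<open>1 \<le> j\<close> by (cases j) auto
    have "Vs i = A ` Vs j"
      using \<open>lowers d A Vs\<close> that unfolding lowers_def i by (metis diff_Suc_1)
    also have "\<dots> = span {A ((B ^^ j) v)}"
      using bottom(2)[OF \<open>j \<le> d\<close>] by (simp add: linear_image_span_singleton[OF linA])
    also have "\<dots> = {0}"
      using A_raised[of i] i j by simp
    finally have "Vs i = {0}" .
    moreover have "(B ^^ i) v \<in> Vs i"
      using bottom(2)[of i] that i by (simp add: span_base)
    ultimately show False
      using bottom(3)[of i] that i by simp
  qed
  obtain n where n: "d = Suc n"
    using \<open>1 \<le> d\<close> by (cases d) auto
  have "(B ^^ d) v \<in> Vs d"
    using bottom(2)[of d] by (simp add: span_base)
  then have "B ((B ^^ d) v) = 0"
    using \<open>raises d B Vs\<close> unfolding raises_def by blast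
  then have "(B ^^ d) v = - B (A ((B ^^ d) v))"
    using comm[of "(B ^^ d) v"] linear_ops(3)[OF linA] by simp
  also have "\<dots> = - (of_nat d *s (B ^^ d) v)"
    using A_raised[of n] n by (simp add: linear_ops[OF linB])
  finally have "of_nat (Suc d) *s (B ^^ d) v = 0"
    by (simp add: scale_left_distrib eq_neg_iff_add_eq_0)
  then show "of_nat (Suc d) = (0 :: 'a)"
    using bottom(3)[of d] by simp
qed

lemma gauss_partial_sum:
  assumes linA: "Vector_Spaces.linear scale scale A" and linB: "Vector_Spaces.linear scale scale B"
    and comm: "\<And>v. A (B v) - B (A v) = v" and "A v = 0"
    and char: "\<And>j. 1 \<le> j \<Longrightarrow> j \<le> d \<Longrightarrow> of_nat j \<noteq> (0 :: 'a)"
    and "Suc n \<le> d"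
  defines "s \<equiv> \<Sum>j\<le>Suc n. gauss_coeff j *s (B ^^ j) v"
  shows "A s + B s = gauss_coeff n *s (B ^^ Suc n) v + gauss_coeff (Suc n) *s (B ^^ Suc (Suc n)) v"
proof -
  define w where "w j = (B ^^ j) v" for j
  define T where "T x = A x + B x" for x
  have T_add: "T (x + y) = T x + T y" and T_scale: "T (c *s x) = c *s T x" for x y c
    unfolding T_def by (simp_all add: linear_ops[OF linA] linear_ops[OF linB] scale_right_distrib)
  have T_w: "T (w (Suc j)) = of_nat (Suc j) *s w j + w (Suc (Suc j))" for j
    using commutator_funpow_apply[OF linB, of A 1 v j] comm \<open>A v = 0\<close>
    unfolding T_def w_def by simp
  have "T (\<Sum>j\<le>Suc n. gauss_coeff j *s w j)
      = gauss_coeff n *s w (Suc n) + gauss_coeff (Suc n) *s w (Suc (Suc n))"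
    using \<open>Suc n \<le> d\<close>
  proof (induction n)
    case 0
    have "T (w 0) = w 1"
      unfolding T_def w_def using \<open>A v = 0\<close> by simp
    then show ?case
      by (simp add: T_add T_scale)
  next
    case (Suc n)
    have key: "gauss_coeff (Suc (Suc n)) * of_nat (Suc (Suc n)) = - (gauss_coeff n :: 'a)"
      using char[of "Suc (Suc n)"] Suc.prems by simp
    have "T (\<Sum>j\<le>Suc (Suc n). gauss_coeff j *s w j)
        = T (\<Sum>j\<le>Suc n. gauss_coeff j *s w j) + gauss_coeff (Suc (Suc n)) *s T (w (Suc (Suc n)))"
      by (simp only: sum.atMost_Suc T_add T_scale)
    also have "\<dots> = gauss_coeff n *s w (Suc n) + gauss_coeff (Suc n) *s w (Suc (Suc n))
        + ((gauss_coeff (Suc (Suc n)) * of_nat (Suc (Suc n))) *s w (Suc n)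
          + gauss_coeff (Suc (Suc n)) *s w (Suc (Suc (Suc n))))"
      using Suc by (simp add: T_w scale_right_distrib del: of_nat_Suc)
    also have "\<dots> = gauss_coeff (Suc n) *s w (Suc (Suc n))
        + gauss_coeff (Suc (Suc n)) *s w (Suc (Suc (Suc n)))"
      unfolding key scale_minus_left by simp
    finally show ?case .
  qed
  then show ?thesis
    unfolding s_def T_def w_def .
qed

lemma gauss_vector_kernel:
  assumes linA: "Vector_Spaces.linear scale scale A" and linB: "Vector_Spaces.linear scale scale B"
    and comm: "\<And>v. A (B v) - B (A v) = v"
    and "A v = 0" and nil: "(B ^^ Suc d) v = 0" and "even d"
    and char: "\<And>j. 1 \<le> j \<Longrightarrow> j \<le> d \<Longrightarrow> of_nat j \<noteq> (0 :: 'a)"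
  defines "u \<equiv> \<Sum>j\<le>d. gauss_coeff j *s (B ^^ j) v"
  shows "A u + B u = 0"
proof -
  obtain k where "d = 2 * k"
    using \<open>even d\<close> by (rule evenE)
  then consider "d = 0" | k' where "d = Suc (Suc (2 * k'))"
    by (cases k) auto
  then show ?thesis
  proof cases
    case 1
    then show ?thesis
      unfolding u_def using \<open>A v = 0\<close> nil by simp
  next
    case 2
    then have "Suc (Suc (2 * k')) \<le> d"
      by simp
    from gauss_partial_sum[OF linA linB comm \<open>A v = 0\<close> char this]
    have "A u + B u = gauss_coeff (Suc (2 * k')) *s (B ^^ d) v + gauss_coeff d *s (B ^^ Suc d) v"
      unfolding u_def 2 .
    also have "\<dots> = 0"
      using nil by (simp add: gauss_coeff_odd)
    finally show ?thesis .
  qed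
qed

lemma funpow_apply_sum_nilpotent:
  assumes linB: "Vector_Spaces.linear scale scale B" and nil: "(B ^^ Suc d) v = 0"
  shows "(B ^^ d) (\<Sum>j\<le>d. c j *s (B ^^ j) v) = c 0 *s (B ^^ d) v"
proof -
  note lin = linear_ops[OF linear_funpow[OF linB]]
  have vanish: "(B ^^ d) ((B ^^ Suc j) v) = 0" for j
  proof -
    have "(B ^^ d) ((B ^^ Suc j) v) = (B ^^ (d + Suc j)) v"
      by (simp only: funpow_add comp_apply)
    also have "d + Suc j = j + Suc d"
      by simp
    also have "(B ^^ (j + Suc d)) v = (B ^^ j) ((B ^^ Suc d) v)"
      by (simp only: funpow_add comp_apply)
    finally show ?thesis
      using nil lin(3) by simp
  qed
  have "(B ^^ d) (\<Sum>j\<le>d. c j *s (B ^^ j) v) = (\<Sum>j\<le>d. c j *s (B ^^ d) ((B ^^ j) v))"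
    by (simp add: lin)
  also have "\<dots> = (\<Sum>j\<le>d. if j = 0 then c 0 *s (B ^^ d) v else 0)"
  proof (rule sum.cong[OF refl])
    show "c j *s (B ^^ d) ((B ^^ j) v) = (if j = 0 then c 0 *s (B ^^ d) v else 0)" for j
      by (cases j) (simp_all only: vanish, simp_all)
  qed
  finally show ?thesis
    by simp
qed

lemma LR_pair_rotate:
  assumes dimV: "dim (UNIV :: 'b set) = d + 1" and "2 \<le> d"
    and LR: "LR_pair scale d A B" and comm: "\<And>v. A (B v) - B (A v) = v"
  defines "C \<equiv> \<lambda>v. - A v - B v"
  shows "LR_pair scale d B C" and "LR_pair scale d C A"
proof -
  obtain Vs where linA: "Vector_Spaces.linear scale scale A"
    and linB: "Vector_Spaces.linear scale scale B"
    and dec: "is_decomposition scale d Vs" and low: "lowers d A Vs" and rai: "raises d B Vs"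
    using LR unfolding LR_pair_def by blast
  obtain v where bottom: "A v = 0" "\<And>j. j \<le> d \<Longrightarrow> Vs j = span {(B ^^ j) v}"
    "\<And>j. j \<le> d \<Longrightarrow> (B ^^ j) v \<noteq> 0"
    using LR_pair_bottom_vector[OF dec low rai linB] by blast
  have "1 \<le> d"
    using \<open>2 \<le> d\<close> by simp
  note char = LR_pair_commutator_char[OF low rai linA linB comm bottom this]
  have "even d"
    using even_if_of_nat_Suc_eq_0[OF char \<open>2 \<le> d\<close>] .
  have nilA: "(A ^^ Suc d) x = 0" and nilB: "(B ^^ Suc d) x = 0" for x
    using lowers_funpow_Suc_eq_zero[OF dec low linA] raises_funpow_Suc_eq_zero[OF dec rai linB] .
  define u where "u = (\<Sum>j\<le>d. gauss_coeff j *s (B ^^ j) v)"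
  have "A u + B u = 0"
    unfolding u_def by (rule gauss_vector_kernel[OF linA linB comm bottom(1) nilB \<open>even d\<close> char(1)])
  then have "C u = 0"
    unfolding C_def by (metis diff_conv_add_uminus minus_add_distrib neg_0_equal_iff_equal)
  have "(B ^^ d) u = (B ^^ d) v"
    unfolding u_def using funpow_apply_sum_nilpotent[OF linB nilB] by simp
  then have "u \<noteq> 0"
    using bottom(3)[of d] linear_ops(3)[OF linear_funpow[OF linB]] by auto
  have linC: "Vector_Spaces.linear scale scale C"
    unfolding C_def Vector_Spaces.linear_iff using vector_space_axioms
    by (simp add: linear_ops[OF linA] linear_ops[OF linB] algebra_simps scale_right_diff_distrib)
  have "C (B x) - B (C x) = (- 1) *s x" and "C (A x) - A (C x) = 1 *s x" for x
    using comm[of x] minus_diff_eq[of "A (B x)" "B (A x)"] unfolding C_def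
    by (simp_all add: linear_ops[OF linA] linear_ops[OF linB])
  then show "LR_pair scale d B C" and "LR_pair scale d C A"
    using LR_pair_of_commutator[OF dimV linC linB, of "- 1"]
      LR_pair_of_commutator[OF dimV linC linA, of 1] char(1) \<open>u \<noteq> 0\<close> \<open>C u = 0\<close> nilA nilB
    by (auto intro: LR_pair_swap)
qed

end

theorem lemma4p7:
  fixes scale :: "'f::field \<Rightarrow> 'v::ab_group_add \<Rightarrow> 'v"
    and d :: nat and A B C :: "'v \<Rightarrow> 'v"
  assumes "vector_space scale"
    and "Vector_Spaces.vector_space.dim scale (UNIV :: 'v set) = d + 1"
    and "d \<ge> 2"
    and "LR_pair scale d A B"
    and "\<forall>v. A (B v) - B (A v) = v"
    and "C = (\<lambda>v. - A v - B v)"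
  shows "LR_pair scale d B C \<and> LR_pair scale d C A \<and>
         (\<forall>v. B (C v) - C (B v) = v) \<and> (\<forall>v. C (A v) - A (C v) = v)"
proof -
  have comm: "\<And>v. A (B v) - B (A v) = v"
    using assms(5) by blast
  have linA: "Vector_Spaces.linear scale scale A" and linB: "Vector_Spaces.linear scale scale B"
    using assms(4) unfolding LR_pair_def by blast+
  have "LR_pair scale d B C" "LR_pair scale d C A"
    using vector_space.LR_pair_rotate[OF assms(1-4) comm] assms(6) by simp_all
  moreover have "B (C v) - C (B v) = v" "C (A v) - A (C v) = v" for v
    using comm[of v] unfolding assms(6)
    by (simp_all add: linear_ops[OF linA] linear_ops[OF linB] algebra_simps)
  ultimately show ?thesis
    by blast
qed

end
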